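(* Let $D\subset\mathbb R^n$ be a domain, $\mathcal D=(0,1)\times D$, $|c|<(n+1)\pi/2$, and suppose $u\in\mathcal F_c(\mathcal D)$. Then for each $t_0\in(0,1)$ the function $u(t_0,\cdot)$ belongs to $F_{c-\pi/2}(D)$.
   Context: $F_c=\{A\in\mathrm{Sym}(\mathbb R^n):\mathrm{tr}\tan^{-1}(A)\ge c\}$ ($\tan^{-1}\in(-\pi/2,\pi/2)$ via eigenvalues). For $A\in\mathrm{Sym}(\mathbb R^{n+1})$ (indices $0..n$, $t$ the $0$-th coordinate), $A^+$ is the lower right $n\times n$ block, $I_n=\mathrm{diag}(0,1,\dots,1)$, $\mathcal S=\{A=\mathrm{diag}(0,A^+)\}$, $\arg\in(-\pi,\pi]$; $\widetilde\Theta(A)=\sum_{\lambda\in\mathrm{spec}(I_n+\sqrt{-1}A)}m(\lambda)\arg\lambda$ for $A\notin\mathcal S$ (algebraic multiplicities), $\widetilde\Theta(A)=\pi/2+\mathrm{tr}\tan^{-1}(A^+)$ for $A\in\mathcal S$; $\mathcal F_c=\{A:\widetilde\Theta(A)\ge c\}$. For $F\subset\mathrm{Sym}(\mathbb R^m)$ with dual $\widetilde F=\mathrm{Sym}(\mathbb R^m)\setminus(-\mathrm{Int}F)$ and open $X$: upper semicontinuous $u$ is subaffine if for all compact $K\subset X$ and affine $a$, $u\le a$ on $\partial K$ implies $u\le a$ on $K$; $u\in F(X)$ if $u$ is upper semicontinuous and $u+v$ is subaffine for every $v\in C^2(X)$ with $\nabla^2v\in\widetilde F$ everywhere. *)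

theory Defs
  imports "HOL-Analysis.Analysis" "HOL-Computational_Algebra.Polynomial"
          "HOL-Library.Extended_Real"
begin

definition Sym :: "(real^'m^'m) set" where
  "Sym = {A. transpose A = A}"

definition char_poly_c :: "complex^'m^'m \<Rightarrow> complex poly" where
  "char_poly_c M = det (\<chi> i j. (if i = j then [:0, 1:] else 0) - [:M $ i $ j:])"

definition eigvals_c :: "complex^'m^'m \<Rightarrow> complex multiset" where
  "eigvals_c M = proots (char_poly_c M)"

definition cmat :: "real^'m^'m \<Rightarrow> complex^'m^'m" where
  "cmat A = (\<chi> i j. complex_of_real (A $ i $ j))"

text \<open>tr arctan(A) = sum of arctan of the (real) eigenvalues of symmetric A.\<close>
definition tr_arctan :: "real^'m^'m \<Rightarrow> real" where
  "tr_arctan A = sum_mset (image_mset (\<lambda>z. arctan (Re z)) (eigvals_c (cmat A)))"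

definition Fc :: "real \<Rightarrow> (real^'m^'m) set" where
  "Fc c = {A \<in> Sym. tr_arctan A \<ge> c}"

section \<open>The parabolic (n+1)-dimensional objects; index None is the t-coordinate 0\<close>

definition Aplus :: "real^('n::finite option)^('n::finite option) \<Rightarrow> real^'n^'n" where
  "Aplus A = (\<chi> i j. A $ Some i $ Some j)"

definition In_mat :: "real^('n::finite option)^('n::finite option)" where
  "In_mat = (\<chi> i j. if i = j \<and> i \<noteq> None then 1 else 0)"

definition S_set :: "(real^('n::finite option)^('n::finite option)) set" where
  "S_set = {A \<in> Sym. \<forall>i j. (i = None \<or> j = None) \<longrightarrow> A $ i $ j = 0}"

definition Theta_tilde :: "real^('n::finite option)^('n::finite option) \<Rightarrow> real" where
  "Theta_tilde A =
     (if A \<in> S_set then pi / 2 + tr_arctan (Aplus A)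
      else sum_mset (image_mset Arg
             (eigvals_c (\<chi> i j. complex_of_real (In_mat $ i $ j) + \<i> * complex_of_real (A $ i $ j)))))"

definition Fpar :: "real \<Rightarrow> (real^('n::finite option)^('n::finite option)) set" where
  "Fpar c = {A \<in> Sym. Theta_tilde A \<ge> c}"

definition dual_set :: "(real^'m^'m) set \<Rightarrow> (real^'m^'m) set" where
  "dual_set F = Sym - uminus ` ((top_of_set Sym) interior_of F)"

definition usc_on :: "(real^'m) set \<Rightarrow> (real^'m \<Rightarrow> ereal) \<Rightarrow> bool" where
  "usc_on X u \<longleftrightarrow> (\<forall>x\<in>X. \<forall>c. u x < c \<longrightarrow> (\<forall>\<^sub>F y in at x within X. u y < c))"

definition affine_fun :: "(real^'m \<Rightarrow> real) \<Rightarrow> bool" where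
  "affine_fun a \<longleftrightarrow> (\<exists>b c. \<forall>x. a x = b \<bullet> x + c)"

definition subaffine :: "(real^'m) set \<Rightarrow> (real^'m \<Rightarrow> ereal) \<Rightarrow> bool" where
  "subaffine X u \<longleftrightarrow> usc_on X u \<and>
     (\<forall>K a. compact K \<and> K \<subseteq> X \<and> affine_fun a \<and>
        (\<forall>x\<in>frontier K. u x \<le> ereal (a x)) \<longrightarrow> (\<forall>x\<in>K. u x \<le> ereal (a x)))"

definition C2_hess :: "(real^'m) set \<Rightarrow> (real^'m \<Rightarrow> real) \<Rightarrow> (real^'m \<Rightarrow> real^'m^'m) \<Rightarrow> bool" where
  "C2_hess X v H \<longleftrightarrow> (\<exists>g. (\<forall>x\<in>X. (v has_derivative (\<lambda>h. g x \<bullet> h)) (at x)) \<and>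
       (\<forall>x\<in>X. (g has_derivative (\<lambda>h. H x *v h)) (at x)) \<and> continuous_on X H)"

definition F_class :: "(real^'m^'m) set \<Rightarrow> (real^'m) set \<Rightarrow> (real^'m \<Rightarrow> ereal) set" where
  "F_class F X = {u. (\<forall>x\<in>X. u x < \<infinity>) \<and> usc_on X u \<and>
      (\<forall>v H. C2_hess X v H \<and> (\<forall>x\<in>X. H x \<in> dual_set F) \<longrightarrow>
             subaffine X (\<lambda>x. u x + ereal (v x)))}"

end

theory Submission
  imports Defs "HOL-Computational_Algebra.Fundamental_Theorem_Algebra"
begin

text \<open>For \<open>a > 0\<close> and symmetric \<open>Y\<close> the matrix \<open>diag(a, Y)\<close> is not in \<open>S\<close>, and the
  eigenvalues of \<open>I\<^sub>n + i diag(a, Y)\<close> are \<open>i a\<close> and \<open>1 + i \<lambda>\<close> for the (real) eigenvalues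
  \<open>\<lambda>\<close> of \<open>Y\<close>. Hence \<open>\<Theta>(diag(a, Y)) = \<pi>/2 + tr arctan Y\<close>, so \<open>diag(-a, H)\<close> lies in the
  dual of \<open>\<F>_c\<close> whenever \<open>H\<close> lies in the dual of \<open>F_(c - \<pi>/2)\<close>, and every test function
  \<open>v\<close> on \<open>D\<close> gives test functions \<open>v(y) - M (t - t\<^sub>0)\<^sup>2\<close> on \<open>(0,1) \<times> D\<close>. Subaffinity of
  \<open>u + v(y) - M (t - t\<^sub>0)\<^sup>2\<close> on a thin cylinder \<open>[t\<^sub>0 - \<delta>, t\<^sub>0 + \<delta>] \<times> K\<close>, with \<open>M\<close> so large
  that the penalty beats the upper bound of \<open>u\<close> on its top and bottom, then gives subaffinity
  of \<open>u(t\<^sub>0, -) + v\<close> on \<open>D\<close>.\<close>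

lemma sum_UNIV_option:
  "sum f (UNIV :: 'a::finite option set) = f None + (\<Sum>i\<in>UNIV. f (Some i))"
  by (simp add: UNIV_option_conv sum.reindex)

lemma prod_UNIV_option:
  "prod f (UNIV :: 'a::finite option set) = f None * (\<Prod>i\<in>UNIV. f (Some i))"
  by (simp add: UNIV_option_conv prod.reindex)

section \<open>Determinants and characteristic polynomials\<close>

lemma poly_det:
  fixes A :: "'a::comm_ring_1 poly^'n^'n"
  shows "poly (det A) z = det (\<chi> i j. poly (A $ i $ j) z)"
  unfolding det_def by (simp add: poly_sum poly_prod)

lemma pcompose_det:
  fixes A :: "'a::comm_ring_1 poly^'n^'n"
  shows "pcompose (det A) q = det (\<chi> i j. pcompose (A $ i $ j) q)"
  unfolding det_def by (simp add: pcompose_sum pcompose_smult pcompose_prod of_int_poly)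

lemma det_scale_entries:
  fixes A :: "'a::comm_ring_1^'n^'n"
  shows "det (\<chi> i j. c * A $ i $ j) = c ^ CARD('n) * det A"
  unfolding det_def by (simp add: sum_distrib_left prod.distrib algebra_simps)

lemma det_zero_imp_kernel:
  fixes A :: "'a::field^'n^'n"
  assumes "det A = 0"
  obtains x where "x \<noteq> 0" and "A *v x = 0"
  using assms invertible_det_nz invertible_left_inverse matrix_left_invertible_ker by metis

text \<open>Only permutations fixing \<open>None\<close> contribute, and these are the lifts of permutations
  of \<open>'n\<close>.\<close>

lemma det_option_first_row:
  fixes M :: "'a::comm_ring_1^('n::finite option)^('n option)"
  assumes "\<And>k. k \<noteq> None \<Longrightarrow> M $ None $ k = 0"
  shows "det M = M $ None $ None * det (\<chi> i j. M $ Some i $ Some j)"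
proof -
  let ?f = "\<lambda>p. of_int (sign p) * (\<Prod>i\<in>UNIV. M $ i $ p i)"
  let ?lift = "map_permutation (UNIV :: 'n set) Some"
  have Some_bij: "bij_betw Some (UNIV :: 'n set) (range Some)"
    by (simp add: bij_betw_def)
  have the_bij: "bij_betw the (range (Some :: 'n \<Rightarrow> 'n option)) UNIV"
    by (rule bij_betw_byWitness[where f' = Some]) auto
  have "det M = sum ?f {p. p permutes (UNIV :: 'n option set)}"
    unfolding det_def ..
  also have "\<dots> = sum ?f {p. p permutes range (Some :: 'n \<Rightarrow> 'n option)}"
  proof (rule sum.mono_neutral_right)
    show "finite {p. p permutes (UNIV :: 'n option set)}"
      by (simp add: finite_permutations)
    show "{p. p permutes range Some} \<subseteq> {p. p permutes (UNIV :: 'n option set)}"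
      using permutes_subset by blast
    show "\<forall>p\<in>{p. p permutes UNIV} - {p. p permutes range Some}. ?f p = 0"
    proof
      fix p assume p: "p \<in> {p. p permutes UNIV} - {p. p permutes range (Some :: 'n \<Rightarrow> _)}"
      have "p None \<noteq> None"
      proof
        assume fixes_None: "p None = None"
        have "p permutes range Some"
          unfolding permutes_def
        proof (intro conjI allI impI)
          fix x :: "'n option" assume "x \<notin> range Some"
          then show "p x = x" using fixes_None by (cases x) auto
        next
          fix y show "\<exists>!x. p x = y" using p by (auto simp: permutes_def)
        qed
        with p show False by blast
      qed
      then show "?f p = 0"
        using assms by (simp add: prod_UNIV_option)
    qed
  qed
  also have "\<dots> = sum (?f \<circ> ?lift) {q. q permutes (UNIV :: 'n set)}"
  proof (rule sum.reindex_bij_witness[symmetric,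
        where j = ?lift and i = "map_permutation (range Some) the"])
    fix p assume "p \<in> {p. p permutes range (Some :: 'n \<Rightarrow> _)}"
    then have p: "p permutes range Some" by simp
    show "?lift (map_permutation (range Some) the p) = p"
      by (rule map_permutation_compose_inv[OF the_bij p]) auto
    show "map_permutation (range Some) the p \<in> {q. q permutes UNIV}"
      using map_permutation_permutes[OF the_bij p] by simp
  next
    fix q assume "q \<in> {q. q permutes (UNIV :: 'n set)}"
    then have q: "q permutes UNIV" by simp
    show "map_permutation (range Some) the (?lift q) = q"
      by (rule map_permutation_compose_inv[OF Some_bij q]) auto
    show "?lift q \<in> {p. p permutes range Some}"
      using map_permutation_permutes[OF Some_bij q] by simp
  qed simp
  also have "\<dots> = (\<Sum>q | q permutes (UNIV :: 'n set).
      M $ None $ None * (of_int (sign q) * (\<Prod>i\<in>UNIV. M $ Some i $ Some (q i))))"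
  proof (rule sum.cong[OF refl])
    fix q assume "q \<in> {q. q permutes (UNIV :: 'n set)}"
    then have q: "q permutes UNIV" by simp
    have "sign (?lift q) = sign q"
      by (rule sign_map_permutation) (use q in auto)
    moreover have "?lift q None = None"
      by (auto simp: map_permutation_def restrict_id_def)
    moreover have "?lift q (Some i) = Some (q i)" for i
      by (rule map_permutation_apply) auto
    ultimately show "(?f \<circ> ?lift) q
        = M $ None $ None * (of_int (sign q) * (\<Prod>i\<in>UNIV. M $ Some i $ Some (q i)))"
      by (simp add: prod_UNIV_option algebra_simps)
  qed
  also have "\<dots> = M $ None $ None * det (\<chi> i j. M $ Some i $ Some j)"
    unfolding det_def by (simp add: sum_distrib_left)
  finally show ?thesis .
qed

lemma proots_pcompose_linear:
  fixes p :: "complex poly"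
  assumes "m \<noteq> 0"
  shows "proots (pcompose p [:b, m:]) = image_mset (\<lambda>w. (w - b) / m) (proots p)"
proof (cases "p = 0")
  case False
  have factor: "proots (pcompose (\<Prod>x\<in>#R. [:-x, 1:]) [:b, m:]) = image_mset (\<lambda>w. (w - b) / m) R
      \<and> pcompose (\<Prod>x\<in>#R. [:-x, 1:]) [:b, m:] \<noteq> 0" for R :: "complex multiset"
  proof (induction R)
    case (add x R)
    have lin: "pcompose [:-x, 1:] [:b, m:] = smult m [:(b - x) / m, 1:]"
      using assms by (simp add: pcompose_pCons field_simps)
    have root: "proots (pcompose [:-x, 1:] [:b, m:]) = {#(x - b) / m#}"
      unfolding lin proots_smult[OF assms] proots_linear_factor by (simp add: minus_divide_left)
    have nonzero: "pcompose [:-x, 1:] [:b, m:] \<noteq> 0"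
      using lin assms by simp
    from add.IH have IH: "proots (pcompose (\<Prod>x\<in>#R. [:-x, 1:]) [:b, m:]) = image_mset (\<lambda>w. (w - b) / m) R"
      and IH_nonzero: "pcompose (\<Prod>x\<in>#R. [:-x, 1:]) [:b, m:] \<noteq> 0" by auto
    show ?case
      unfolding image_mset_add_mset prod_mset.add_mset pcompose_mult
        proots_mult[OF nonzero IH_nonzero] root IH
      using nonzero IH_nonzero by simp
  qed (simp add: pcompose_1)
  have "pcompose p [:b, m:] = smult (lead_coeff p) (pcompose (\<Prod>x\<in>#proots p. [:-x, 1:]) [:b, m:])"
    by (subst (1) complex_poly_decompose_multiset[symmetric]) (simp add: pcompose_smult)
  then show ?thesis
    using False factor[of "proots p"] by simp
qed simp

lemma Sym_entry_commute:
  assumes "Y \<in> Sym" shows "Y $ i $ j = Y $ j $ i"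
proof -
  have "transpose Y $ j $ i = Y $ i $ j" by (simp add: transpose_def)
  with assms show ?thesis by (simp add: Sym_def)
qed

lemma poly_char_poly_c:
  "poly (char_poly_c M) z = det (\<chi> i j. (if i = j then z else 0) - M $ i $ j)"
  unfolding char_poly_c_def poly_det by (rule arg_cong[where f = det]) (simp add: vec_eq_iff)

lemma Sym_eigenvalue_real:
  fixes Y :: "real^'n^'n"
  assumes Y: "Y \<in> Sym" and x0: "x \<noteq> 0" and eigen: "cmat Y *v x = z *s x"
  shows "Im z = 0"
proof -
  have eigen_row: "(\<Sum>j\<in>UNIV. of_real (Y $ i $ j) * x $ j) = z * x $ i" for i
    using arg_cong[OF eigen, of "\<lambda>w. w $ i"] by (simp add: matrix_vector_mult_def cmat_def)
  text \<open>The Hermitian form \<open>x\<^sup>* Y x\<close> is real and equals \<open>z |x|\<^sup>2\<close>.\<close>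
  define S where "S = (\<Sum>i\<in>UNIV. \<Sum>j\<in>UNIV. cnj (x $ i) * of_real (Y $ i $ j) * x $ j)"
  define N where "N = (\<Sum>i\<in>UNIV. (cmod (x $ i))\<^sup>2)"
  have "cnj S = (\<Sum>i\<in>UNIV. \<Sum>j\<in>UNIV. x $ i * of_real (Y $ i $ j) * cnj (x $ j))"
    unfolding S_def by simp
  also have "\<dots> = (\<Sum>j\<in>UNIV. \<Sum>i\<in>UNIV. x $ i * of_real (Y $ i $ j) * cnj (x $ j))"
    by (rule sum.swap)
  also have "\<dots> = S"
    unfolding S_def using Sym_entry_commute[OF Y] by (simp add: algebra_simps)
  finally have "Im (cnj S) = Im S" by simp
  then have "Im S = 0" by simp
  have "S = (\<Sum>i\<in>UNIV. cnj (x $ i) * (\<Sum>j\<in>UNIV. of_real (Y $ i $ j) * x $ j))"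
    unfolding S_def by (simp add: sum_distrib_left mult.assoc)
  also have "\<dots> = (\<Sum>i\<in>UNIV. cnj (x $ i) * (z * x $ i))"
    by (simp only: eigen_row)
  also have "\<dots> = z * (\<Sum>i\<in>UNIV. cnj (x $ i) * x $ i)"
    by (simp add: sum_distrib_left algebra_simps)
  also have "(\<Sum>i\<in>UNIV. cnj (x $ i) * x $ i) = of_real N"
  proof -
    have "cnj (x $ i) * x $ i = of_real ((cmod (x $ i))\<^sup>2)" for i
      by (subst complex_norm_square) (rule mult.commute)
    then show ?thesis
      unfolding N_def of_real_sum by simp
  qed
  finally have "Im z * N = 0"
    using \<open>Im S = 0\<close> by simp
  moreover have "N > 0"
  proof -
    obtain k where "x $ k \<noteq> 0"
      using x0 by (metis vec_eq_iff zero_index)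
    then have "0 < (cmod (x $ k))\<^sup>2" by simp
    also have "\<dots> \<le> N"
      unfolding N_def by (rule member_le_sum) auto
    finally show ?thesis .
  qed
  ultimately show ?thesis by simp
qed

lemma Sym_char_poly_root_real:
  fixes Y :: "real^'n^'n"
  assumes Y: "Y \<in> Sym" and root: "poly (char_poly_c (cmat Y)) z = 0"
  shows "Im z = 0"
proof -
  obtain x where x0: "x \<noteq> 0" and ker: "(\<chi> i j. (if i = j then z else 0) - cmat Y $ i $ j) *v x = 0"
    using det_zero_imp_kernel root unfolding poly_char_poly_c by blast
  have "(cmat Y *v x) $ i = (z *s x) $ i" for i
  proof -
    have "(\<Sum>j\<in>UNIV. (if i = j then z else 0) * x $ j) - (cmat Y *v x) $ i = 0"
      using arg_cong[OF ker, of "\<lambda>w. w $ i"]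
      by (simp add: matrix_vector_mult_def left_diff_distrib sum_subtractf)
    moreover have "(\<Sum>j\<in>UNIV. (if i = j then z else 0) * x $ j) = z * x $ i"
      by (simp add: if_distrib[of "\<lambda>c. c * _"] sum.delta cong: if_cong)
    ultimately show ?thesis
      by simp
  qed
  then show ?thesis
    using Sym_eigenvalue_real[OF Y x0] by (simp add: vec_eq_iff)
qed

section \<open>Space-time coordinates\<close>

definition spatial :: "real^('n::finite option) \<Rightarrow> real^'n" where
  "spatial z = (\<chi> i. z $ Some i)"

definition spacetime :: "real \<Rightarrow> real^'n \<Rightarrow> real^('n::finite option)" where
  "spacetime t y = (\<chi> j. case j of None \<Rightarrow> t | Some i \<Rightarrow> y $ i)"

lemma spatial_nth [simp]: "spatial z $ i = z $ Some i"
  by (simp add: spatial_def)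

lemma spacetime_nth_None [simp]: "spacetime t y $ None = t"
  and spacetime_nth_Some [simp]: "spacetime t y $ Some i = y $ i"
  by (simp_all add: spacetime_def)

lemma vec_option_eqI: "z $ None = w $ None \<Longrightarrow> (\<And>i. z $ Some i = w $ Some i) \<Longrightarrow> z = w"
  by (metis not_None_eq vec_eq_iff)

lemma spatial_spacetime [simp]: "spatial (spacetime t y) = y"
  by (simp add: vec_eq_iff)

lemma spacetime_spatial [simp]: "spacetime (z $ None) (spatial z) = z"
  by (rule vec_option_eqI) simp_all

lemma spacetime_eq_iff [simp]: "spacetime t y = spacetime s x \<longleftrightarrow> t = s \<and> y = x"
  by (metis spacetime_nth_None spatial_spacetime)

lemma spacetime_0 [simp]: "spacetime 0 0 = 0"
  by (simp add: vec_eq_iff spacetime_def split: option.split)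

lemma spacetime_add: "spacetime t y + spacetime s x = spacetime (t + s) (y + x)"
  and spacetime_diff: "spacetime t y - spacetime s x = spacetime (t - s) (y - x)"
  and spacetime_scaleR: "r *\<^sub>R spacetime t y = spacetime (r * t) (r *\<^sub>R y)"
  by (rule vec_option_eqI; simp)+

lemma inner_option_vec: "z \<bullet> w = z $ None * w $ None + spatial z \<bullet> spatial w"
  unfolding inner_vec_def by (simp add: sum_UNIV_option)

lemma dist_spacetime: "dist (spacetime t y) (spacetime s x) = sqrt ((t - s)\<^sup>2 + (dist y x)\<^sup>2)"
proof -
  have "(norm (spacetime (t - s) (y - x)))\<^sup>2 = (t - s)\<^sup>2 + (norm (y - x))\<^sup>2"
    unfolding power2_norm_eq_inner inner_option_vec by (simp add: power2_eq_square)
  then show ?thesis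
    by (simp add: dist_norm spacetime_diff real_sqrt_unique)
qed

lemma bounded_linear_spatial: "bounded_linear spatial"
  by (simp add: linear_conv_bounded_linear[symmetric] linearI vec_eq_iff)

lemma bounded_linear_spacetime:
  "bounded_linear (\<lambda>p :: real \<times> (real^'n::finite). spacetime (fst p) (snd p))"
proof -
  have "linear (\<lambda>p :: real \<times> (real^'n). spacetime (fst p) (snd p))"
    by (rule linearI) (simp_all add: spacetime_add spacetime_scaleR)
  then show ?thesis by (simp add: linear_conv_bounded_linear)
qed

lemma has_derivative_spacetime [derivative_intros]:
  assumes "(f has_derivative f') (at x within S)" and "(g has_derivative g') (at x within S)"
  shows "((\<lambda>x. spacetime (f x) (g x)) has_derivative (\<lambda>h. spacetime (f' h) (g' h))) (at x within S)"
  using bounded_linear.has_derivative[OF bounded_linear_spacetime has_derivative_Pair[OF assms]]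
  by simp

lemma continuous_on_spacetime [continuous_intros]:
  assumes "continuous_on S f" and "continuous_on S g"
  shows "continuous_on S (\<lambda>x. spacetime (f x) (g x))"
  using bounded_linear.continuous_on[OF bounded_linear_spacetime continuous_on_Pair[OF assms]]
  by simp

lemma continuous_on_spatial [continuous_intros]:
  "continuous_on S f \<Longrightarrow> continuous_on S (\<lambda>x. spatial (f x))"
  by (rule bounded_linear.continuous_on[OF bounded_linear_spatial])

section \<open>Block diagonal matrices and the phase \<open>\<Theta>\<close>\<close>

definition block_diag :: "real \<Rightarrow> real^'n^'n \<Rightarrow> real^('n::finite option)^('n option)" where
  "block_diag a Y = (\<chi> j. case j of None \<Rightarrow> spacetime a 0 | Some p \<Rightarrow> spacetime 0 (Y $ p))"

lemma block_diag_nth_None [simp]: "block_diag a Y $ None = spacetime a 0"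
  and block_diag_nth_Some [simp]: "block_diag a Y $ Some p = spacetime 0 (Y $ p)"
  by (simp_all add: block_diag_def)

lemma block_diag_mult_vec: "block_diag a Y *v h = spacetime (a * h $ None) (Y *v spatial h)"
  by (rule vec_option_eqI) (simp_all add: matrix_vector_mult_def sum_UNIV_option)

lemma block_diag_uminus: "- block_diag a Y = block_diag (- a) (- Y)"
  by (rule vec_option_eqI) (simp_all add: spacetime_scaleR[of "-1", simplified])

lemma norm_spacetime_0: "norm (spacetime 0 y) = norm y"
  using dist_spacetime[of 0 y 0 0] by (simp add: dist_norm)

lemma dist_block_diag: "dist (block_diag a Y) (block_diag a Y') = dist Y Y'"
proof -
  have "norm (block_diag a Y - block_diag a Y') = norm (Y - Y')"
    unfolding norm_vec_def L2_set_def
    by (simp add: sum_UNIV_option spacetime_diff norm_spacetime_0)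
  then show ?thesis
    by (simp add: dist_norm)
qed

lemma block_diag_Sym:
  assumes "Y \<in> Sym" shows "block_diag a Y \<in> Sym"
proof -
  have "transpose (block_diag a Y) = block_diag a Y"
    by (rule vec_option_eqI; rule vec_option_eqI)
       (simp_all add: transpose_def Sym_entry_commute[OF assms])
  then show ?thesis
    by (simp add: Sym_def)
qed

definition In_plus_iA :: "real^('n::finite option)^('n option) \<Rightarrow> complex^('n option)^('n option)" where
  "In_plus_iA A = (\<chi> i j. complex_of_real (In_mat $ i $ j) + \<i> * complex_of_real (A $ i $ j))"

lemma char_poly_c_nonzero_Sym:
  assumes "Y \<in> Sym" shows "char_poly_c (cmat Y) \<noteq> 0"
  using Sym_char_poly_root_real[OF assms, of \<i>] by auto

text \<open>In the spatial block, \<open>X I - (I + i Y) = i ((i - i X) I - Y)\<close>.\<close>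

lemma char_poly_c_In_plus_iA_block_diag:
  fixes Y :: "real^'n::finite^'n"
  shows "char_poly_c (In_plus_iA (block_diag a Y))
     = [:-(\<i> * of_real a), 1:] * ([:\<i>:] ^ CARD('n) * pcompose (char_poly_c (cmat Y)) [:\<i>, -\<i>:])"
proof -
  define CM where "CM = (\<chi> i j. (if i = j then [:0, 1:] else 0) - [:In_plus_iA (block_diag a Y) $ i $ j:])"
  define CY where "CY = (\<chi> i j. (if i = j then [:0, 1:] else 0) - [:cmat Y $ i $ j:])"
  have CM_None: "CM $ None $ k = 0" if "k \<noteq> None" for k
    using that by (auto simp: CM_def In_plus_iA_def In_mat_def)
  have CM_Some: "CM $ Some i $ Some j = [:\<i>:] * pcompose (CY $ i $ j) [:\<i>, -\<i>:]" for i j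
  proof -
    have "poly (CM $ Some i $ Some j) t = poly ([:\<i>:] * pcompose (CY $ i $ j) [:\<i>, -\<i>:]) t" for t
      by (simp add: CM_def CY_def In_plus_iA_def In_mat_def cmat_def poly_pcompose algebra_simps)
    then show ?thesis
      using poly_eq_poly_eq_iff by blast
  qed
  have "char_poly_c (In_plus_iA (block_diag a Y)) = CM $ None $ None * det (\<chi> i j. CM $ Some i $ Some j)"
    unfolding char_poly_c_def CM_def[symmetric] by (rule det_option_first_row) (rule CM_None)
  also have "CM $ None $ None = [:-(\<i> * of_real a), 1:]"
    by (simp add: CM_def In_plus_iA_def In_mat_def)
  also have "(\<chi> i j. CM $ Some i $ Some j)
      = (\<chi> i j. [:\<i>:] * (\<chi> i j. pcompose (CY $ i $ j) [:\<i>, -\<i>:]) $ i $ j)"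
    by (simp only: CM_Some vec_lambda_beta)
  also have "det \<dots> = [:\<i>:] ^ CARD('n) * pcompose (det CY) [:\<i>, -\<i>:]"
    unfolding det_scale_entries pcompose_det ..
  finally show ?thesis
    by (simp add: CY_def char_poly_c_def)
qed

lemma eigvals_c_In_plus_iA_block_diag:
  fixes Y :: "real^'n::finite^'n"
  assumes "Y \<in> Sym"
  shows "eigvals_c (In_plus_iA (block_diag a Y))
    = add_mset (\<i> * of_real a) (image_mset (\<lambda>w. 1 + \<i> * w) (eigvals_c (cmat Y)))"
proof -
  have nonzero: "pcompose (char_poly_c (cmat Y)) [:\<i>, -\<i>:] \<noteq> 0"
    using char_poly_c_nonzero_Sym[OF assms] by (simp add: pcompose_eq_0_iff)
  have linear_nonzero: "[:-(\<i> * of_real a), 1:] \<noteq> 0"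
    and power_nonzero: "[:\<i>:] ^ CARD('n) \<noteq> (0 :: complex poly)"
    by simp_all
  then have product_nonzero: "[:\<i>:] ^ CARD('n) * pcompose (char_poly_c (cmat Y)) [:\<i>, -\<i>:] \<noteq> 0"
    using nonzero by simp
  have shift: "proots (pcompose p [:\<i>, -\<i>:]) = image_mset (\<lambda>w. 1 + \<i> * w) (proots p)" for p
  proof -
    have "(w - \<i>) / - \<i> = 1 + \<i> * w" for w
      by (simp add: field_simps)
    then show ?thesis
      using proots_pcompose_linear[of "- \<i>" p \<i>] by (simp add: add.commute)
  qed
  show ?thesis
    unfolding eigvals_c_def char_poly_c_In_plus_iA_block_diag
      proots_mult[OF linear_nonzero product_nonzero] proots_mult[OF power_nonzero nonzero] shift
    by (simp add: proots_power)
qed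

lemma Theta_tilde_block_diag:
  assumes "a > 0" and "Y \<in> Sym"
  shows "Theta_tilde (block_diag a Y) = pi / 2 + tr_arctan Y"
proof -
  have "block_diag a Y $ None $ None \<noteq> 0"
    using assms(1) by simp
  then have "block_diag a Y \<notin> S_set"
    unfolding S_set_def by blast
  then have "Theta_tilde (block_diag a Y)
      = Arg (\<i> * of_real a) + (\<Sum>w\<in>#eigvals_c (cmat Y). Arg (1 + \<i> * w))"
    by (simp add: Theta_tilde_def In_plus_iA_def[symmetric] eigvals_c_In_plus_iA_block_diag[OF assms(2)]
        multiset.map_comp o_def)
  also have "Arg (\<i> * of_real a) = pi / 2"
    using assms(1) Arg_cis[of "pi / 2"] by simp
  also have "image_mset (\<lambda>w. Arg (1 + \<i> * w)) (eigvals_c (cmat Y))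
           = image_mset (\<lambda>w. arctan (Re w)) (eigvals_c (cmat Y))"
  proof (rule image_mset_cong)
    fix w assume "w \<in># eigvals_c (cmat Y)"
    then have "Im w = 0"
      using char_poly_c_nonzero_Sym[OF assms(2)] Sym_char_poly_root_real[OF assms(2)]
      by (simp add: eigvals_c_def)
    then have "1 + \<i> * w = 1 + \<i> * of_real (Re w)"
      by (simp add: complex_eq_iff)
    moreover have "Arg (1 + \<i> * of_real (Re w)) = arctan (Re w)"
      by (simp add: arg_conv_arctan)
    ultimately show "Arg (1 + \<i> * w) = arctan (Re w)"
      by simp
  qed
  finally show ?thesis
    by (simp add: tr_arctan_def)
qed

lemma Sym_uminus: "Y \<in> Sym \<Longrightarrow> - Y \<in> Sym"
  unfolding Sym_def by (simp add: vec_eq_iff transpose_def)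

lemma mem_uminus_image_iff: "x \<in> uminus ` S \<longleftrightarrow> - x \<in> (S :: 'a::group_add set)"
  by (metis image_eqI minus_minus imageE)

lemma interior_Fc_if_block_diag_interior_Fpar:
  assumes "a > 0" and "Y \<in> Sym" and "block_diag a Y \<in> (top_of_set Sym) interior_of (Fpar c)"
  shows "Y \<in> (top_of_set Sym) interior_of (Fc (c - pi / 2))"
proof -
  obtain T where T: "openin (top_of_set Sym) T" "block_diag a Y \<in> T" "T \<subseteq> Fpar c"
    using assms(3) by (auto simp: interior_of_def)
  then obtain U where U: "open U" "T = Sym \<inter> U"
    by (auto simp: openin_open)
  then obtain r where r: "r > 0" "ball (block_diag a Y) r \<subseteq> U"
    using T(2) by (meson IntD2 open_contains_ball)
  have "Sym \<inter> ball Y r \<subseteq> Fc (c - pi / 2)"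
  proof
    fix Y' assume Y': "Y' \<in> Sym \<inter> ball Y r"
    then have "block_diag a Y' \<in> T"
      using U r block_diag_Sym[of Y' a] by (auto simp: dist_block_diag)
    then have "c \<le> Theta_tilde (block_diag a Y')"
      using T(3) by (auto simp: Fpar_def)
    then show "Y' \<in> Fc (c - pi / 2)"
      using Y' Theta_tilde_block_diag[OF assms(1), of Y'] by (simp add: Fc_def)
  qed
  moreover have "openin (top_of_set Sym) (Sym \<inter> ball Y r)"
    by (simp add: openin_open_Int)
  ultimately show ?thesis
    using assms(2) r(1) unfolding interior_of_def by auto
qed

lemma block_diag_mem_dual_Fpar:
  assumes "a > 0" and H: "H \<in> dual_set (Fc (c - pi / 2))"
  shows "block_diag (- a) H \<in> dual_set (Fpar c)"
proof -
  have "H \<in> Sym" and H_not_interior: "- H \<notin> (top_of_set Sym) interior_of (Fc (c - pi / 2))"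
    using H by (auto simp: dual_set_def mem_uminus_image_iff)
  moreover have "- block_diag (- a) H = block_diag a (- H)"
    by (simp add: block_diag_uminus)
  ultimately show ?thesis
    using interior_Fc_if_block_diag_interior_Fpar[OF assms(1) Sym_uminus]
    by (auto simp: dual_set_def mem_uminus_image_iff block_diag_Sym)
qed

section \<open>Upper semicontinuity\<close>

lemma usc_on_open_less:
  assumes X: "open X" and u: "usc_on X u" and h: "continuous_on X h"
  shows "open {z \<in> X. u z < ereal (h z)}"
proof (rule open_subopen[THEN iffD2], intro ballI)
  fix z assume z: "z \<in> {z \<in> X. u z < ereal (h z)}"
  then obtain r where r: "u z < ereal r" "r < h z"
    using ereal_dense2[of "u z" "ereal (h z)"] by auto
  obtain S where S: "open S" "z \<in> S" "\<forall>y\<in>S. y \<noteq> z \<longrightarrow> y \<in> X \<longrightarrow> u y < ereal r"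
    using u z r(1) unfolding usc_on_def eventually_at_topological by blast
  define T where "T = S \<inter> (X \<inter> h -` {r<..})"
  have "open T"
    unfolding T_def by (intro open_Int S(1) continuous_open_preimage[OF h X] open_greaterThan)
  moreover have "z \<in> T"
    using S(2) z r(2) by (simp add: T_def)
  moreover have "T \<subseteq> {z \<in> X. u z < ereal (h z)}"
  proof
    fix y assume y: "y \<in> T"
    show "y \<in> {z \<in> X. u z < ereal (h z)}"
    proof (cases "y = z")
      case False
      then have "u y < ereal r" using S(3) y by (simp add: T_def)
      also have "ereal r < ereal (h y)" using y by (simp add: T_def)
      finally show ?thesis using y by (simp add: T_def)
    qed (use z in simp)
  qed
  ultimately show "\<exists>T. open T \<and> z \<in> T \<and> T \<subseteq> {z \<in> X. u z < ereal (h z)}"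
    by blast
qed

lemma usc_on_compact_bounded_above:
  assumes X: "open X" and u: "usc_on X u" and finite: "\<forall>z\<in>X. u z < \<infinity>"
    and h: "continuous_on X h" and K: "compact K" "K \<subseteq> X"
  obtains B where "\<forall>z\<in>K. u z < ereal (h z + B)"
proof -
  let ?U = "\<lambda>n::nat. {z \<in> X. u z < ereal (h z + real n)}"
  have open_U: "open (?U n)" for n
    by (rule usc_on_open_less[OF X u]) (intro continuous_intros h)
  have cover: "K \<subseteq> (\<Union>n. ?U n)"
  proof
    fix z assume "z \<in> K"
    then have z: "z \<in> X" using K(2) by auto
    then obtain s where s: "u z < ereal s"
      using finite ereal_dense2[of "u z" \<infinity>] by auto
    obtain n :: nat where "s - h z < real n"
      using reals_Archimedean2 by blast
    then have "u z < ereal (h z + real n)"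
      using s by (simp add: order_less_le_trans)
    then show "z \<in> (\<Union>n. ?U n)" using z by blast
  qed
  obtain C where C: "C \<subseteq> UNIV" "finite C" "K \<subseteq> (\<Union>n\<in>C. ?U n)"
    by (rule compactE_image[OF K(1) open_U cover])
  have "\<forall>z\<in>K. u z < ereal (h z + real (Max (insert 0 C)))"
  proof
    fix z assume "z \<in> K"
    then obtain n where "n \<in> C" "u z < ereal (h z + real n)"
      using C(3) by blast
    moreover have "n \<le> Max (insert 0 C)"
      using \<open>n \<in> C\<close> C(2) by simp
    ultimately show "u z < ereal (h z + real (Max (insert 0 C)))"
      by (simp add: order_less_le_trans)
  qed
  then show ?thesis by (rule that)
qed

lemma usc_on_spacetime_slice:
  assumes u: "usc_on X u" and D: "spacetime t ` D \<subseteq> X"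
  shows "usc_on D (\<lambda>y. u (spacetime t y))"
  unfolding usc_on_def
proof (intro ballI allI impI)
  fix y c assume y: "y \<in> D" and less: "u (spacetime t y) < c"
  obtain S where S: "open S" "spacetime t y \<in> S"
    "\<forall>z\<in>S. z \<noteq> spacetime t y \<longrightarrow> z \<in> X \<longrightarrow> u z < c"
    using u D y less unfolding usc_on_def eventually_at_topological by blast
  show "\<forall>\<^sub>F y' in at y within D. u (spacetime t y') < c"
    unfolding eventually_at_topological
  proof (intro exI conjI ballI impI)
    show "open (spacetime t -` S)"
      by (rule open_vimage[OF S(1) continuous_on_spacetime[OF continuous_on_const continuous_on_id]])
    show "y \<in> spacetime t -` S"
      using S(2) by simp
    fix y' assume "y' \<in> spacetime t -` S" "y' \<noteq> y" "y' \<in> D"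
    then show "u (spacetime t y') < c"
      using S(3) D by auto
  qed
qed

section \<open>Penalized test functions and cylinders\<close>

lemma has_derivative_vec_nth [derivative_intros]:
  "(f has_derivative f') F \<Longrightarrow> ((\<lambda>x. f x $ i) has_derivative (\<lambda>h. f' h $ i)) F"
  by (rule bounded_linear.has_derivative[OF bounded_linear_vec_nth])

lemma has_derivative_spatial [derivative_intros]:
  "(f has_derivative f') F \<Longrightarrow> ((\<lambda>x. spatial (f x)) has_derivative (\<lambda>h. spatial (f' h))) F"
  by (rule bounded_linear.has_derivative[OF bounded_linear_spatial])

lemma continuous_on_block_diag [continuous_intros]:
  assumes "continuous_on S f"
  shows "continuous_on S (\<lambda>x. block_diag a (f x))"
proof -
  have entries: "continuous_on S (\<lambda>x. f x $ p)" for p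
    by (rule bounded_linear.continuous_on[OF bounded_linear_vec_nth assms])
  have "continuous_on S (\<lambda>x. case j of None \<Rightarrow> spacetime a 0 | Some p \<Rightarrow> spacetime 0 (f x $ p))" for j
    by (cases j) (auto intro!: continuous_intros entries)
  then show ?thesis
    unfolding block_diag_def by (rule continuous_on_vec_lambda)
qed

lemma C2_hess_penalized:
  assumes "C2_hess D v H" and X: "spatial ` X \<subseteq> D"
  shows "C2_hess X (\<lambda>z. v (spatial z) - M * (z $ None - t0)\<^sup>2)
                   (\<lambda>z. block_diag (- 2 * M) (H (spatial z)))"
proof -
  obtain g where g: "\<forall>y\<in>D. (v has_derivative (\<lambda>h. g y \<bullet> h)) (at y)"
    and H: "\<forall>y\<in>D. (g has_derivative (\<lambda>h. H y *v h)) (at y)" and H_cont: "continuous_on D H"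
    using assms(1) unfolding C2_hess_def by blast
  define G where "G z = spacetime (- 2 * M * (z $ None - t0)) (g (spatial z))" for z
  have derivative: "((\<lambda>z. v (spatial z) - M * (z $ None - t0)\<^sup>2) has_derivative (\<lambda>h. G z \<bullet> h)) (at z)"
    if "z \<in> X" for z
  proof -
    have "((\<lambda>z. v (spatial z)) has_derivative (\<lambda>h. g (spatial z) \<bullet> spatial h)) (at z)"
      using g X that by (intro has_derivative_compose[OF has_derivative_spatial[OF has_derivative_ident]]) auto
    then have "((\<lambda>z. v (spatial z) - M * (z $ None - t0)\<^sup>2) has_derivative
        (\<lambda>h. g (spatial z) \<bullet> spatial h - M * (of_nat 2 * (h $ None - 0) * (z $ None - t0) ^ (2 - 1)))) (at z)"
      by (intro derivative_intros)
    then show ?thesis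
      by (rule has_derivative_eq_rhs) (simp add: fun_eq_iff G_def inner_option_vec algebra_simps)
  qed
  have gradient: "(G has_derivative (\<lambda>h. block_diag (- 2 * M) (H (spatial z)) *v h)) (at z)"
    if "z \<in> X" for z
  proof -
    have "((\<lambda>z. g (spatial z)) has_derivative (\<lambda>h. H (spatial z) *v spatial h)) (at z)"
      using H X that by (intro has_derivative_compose[OF has_derivative_spatial[OF has_derivative_ident]]) auto
    then have "(G has_derivative (\<lambda>h. spacetime (- 2 * M * (h $ None - 0)) (H (spatial z) *v spatial h))) (at z)"
      unfolding G_def[abs_def] by (intro derivative_intros)
    then show ?thesis
      by (rule has_derivative_eq_rhs) (simp add: fun_eq_iff block_diag_mult_vec)
  qed
  have "continuous_on X (\<lambda>z. block_diag (- 2 * M) (H (spatial z)))"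
    using X by (intro continuous_intros continuous_on_compose2[OF H_cont]) auto
  then show ?thesis
    unfolding C2_hess_def using derivative gradient by blast
qed

definition cylinder :: "real \<Rightarrow> real \<Rightarrow> (real^'n) set \<Rightarrow> (real^('n::finite option)) set" where
  "cylinder t0 \<delta> K = {z. \<bar>z $ None - t0\<bar> \<le> \<delta> \<and> spatial z \<in> K}"

lemma spacetime_mem_cylinder [simp]:
  "spacetime t y \<in> cylinder t0 \<delta> K \<longleftrightarrow> \<bar>t - t0\<bar> \<le> \<delta> \<and> y \<in> K"
  by (simp add: cylinder_def)

lemma cylinder_mono: "\<delta> \<le> \<delta>' \<Longrightarrow> cylinder t0 \<delta> K \<subseteq> cylinder t0 \<delta>' K"
  by (auto simp: cylinder_def)

lemma compact_cylinder:
  assumes "compact K" shows "compact (cylinder t0 \<delta> K)"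
proof -
  have "cylinder t0 \<delta> K = (\<lambda>p. spacetime (fst p) (snd p)) ` ({t0 - \<delta>..t0 + \<delta>} \<times> K)"
  proof (intro equalityI subsetI)
    fix z assume "z \<in> cylinder t0 \<delta> K"
    then have "(z $ None, spatial z) \<in> {t0 - \<delta>..t0 + \<delta>} \<times> K"
      by (auto simp: cylinder_def abs_le_iff)
    then show "z \<in> (\<lambda>p. spacetime (fst p) (snd p)) ` ({t0 - \<delta>..t0 + \<delta>} \<times> K)"
      by (metis (no_types, lifting) fst_conv snd_conv spacetime_spatial image_eqI)
  qed (auto simp: abs_le_iff)
  also have "compact \<dots>"
    using assms by (intro compact_continuous_image compact_Times compact_Icc continuous_intros)
  finally show ?thesis .
qed

lemma dist_spacetime_spatial: "dist z (spacetime t (spatial z)) = \<bar>z $ None - t\<bar>"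
  using dist_spacetime[of "z $ None" "spatial z" t "spatial z"] by simp

lemma cylinder_subset_open:
  assumes "compact K" and "open U" and "spacetime t0 ` K \<subseteq> U"
  obtains \<delta> where "\<delta> > 0" and "cylinder t0 \<delta> K \<subseteq> U"
proof -
  have "compact (spacetime t0 ` K)"
    using assms(1) by (intro compact_continuous_image continuous_intros)
  then obtain \<epsilon> where \<epsilon>: "\<epsilon> > 0" "(\<Union>x\<in>spacetime t0 ` K. ball x \<epsilon>) \<subseteq> U"
    by (rule compact_subset_open_imp_ball_epsilon_subset[OF _ assms(2,3)])
  have "cylinder t0 (\<epsilon> / 2) K \<subseteq> U"
  proof
    fix z assume "z \<in> cylinder t0 (\<epsilon> / 2) K"
    then have "spatial z \<in> K" and "z \<in> ball (spacetime t0 (spatial z)) \<epsilon>"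
      using \<epsilon>(1) by (auto simp: cylinder_def dist_commute dist_spacetime_spatial)
    then have "z \<in> (\<Union>x\<in>spacetime t0 ` K. ball x \<epsilon>)"
      by (intro UN_I imageI) simp_all
    then show "z \<in> U"
      using \<epsilon>(2) by (rule subsetD[rotated])
  qed
  then show ?thesis
    using \<epsilon>(1) that[of "\<epsilon> / 2"] by simp
qed

lemma frontier_cylinder_cases:
  assumes "z \<in> frontier (cylinder t0 \<delta> K)" and "z \<in> cylinder t0 \<delta> K"
  shows "\<bar>z $ None - t0\<bar> = \<delta> \<or> spatial z \<in> frontier K"
proof (rule ccontr)
  assume "\<not> ?thesis"
  then have "\<bar>z $ None - t0\<bar> < \<delta>" and "spatial z \<in> interior K"
    using assms(2) closure_subset by (auto simp: cylinder_def frontier_def)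
  moreover define W where "W = {w. \<bar>w $ None - t0\<bar> < \<delta>} \<inter> spatial -` interior K"
  ultimately have "z \<in> W" by simp
  moreover have "open W"
    unfolding W_def
    by (intro open_Int open_Collect_less open_vimage open_interior continuous_intros
        bounded_linear.continuous_on[OF bounded_linear_vec_nth])
  moreover have "W \<subseteq> cylinder t0 \<delta> K"
    using interior_subset by (fastforce simp: W_def cylinder_def)
  ultimately have "z \<in> interior (cylinder t0 \<delta> K)"
    by (meson interior_maximal subsetD)
  then show False
    using assms(1) by (simp add: frontier_def)
qed

lemma ereal_add_le_if_less: "x < ereal p \<Longrightarrow> p + q \<le> r \<Longrightarrow> x + ereal q \<le> ereal r"
  by (cases x) auto

lemma ereal_less_if_add_le: "x + ereal p \<le> ereal q \<Longrightarrow> e > 0 \<Longrightarrow> x < ereal (q - p + e)"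
  by (cases x) auto

lemma affine_fun_spatial:
  assumes "affine_fun a" shows "affine_fun (\<lambda>z. a (spatial z) + e)"
proof -
  obtain b c where "\<And>y. a y = b \<bullet> y + c"
    using assms by (auto simp: affine_fun_def)
  then have "a (spatial z) + e = spacetime 0 b \<bullet> z + (c + e)" for z
    by (simp add: inner_option_vec)
  then show ?thesis
    unfolding affine_fun_def by blast
qed

lemma C2_hess_continuous_on:
  assumes "C2_hess D v H" shows "continuous_on D v"
proof -
  obtain g where "\<forall>y\<in>D. (v has_derivative (\<lambda>h. g y \<bullet> h)) (at y)"
    using assms by (auto simp: C2_hess_def)
  then show ?thesis
    by (intro continuous_at_imp_continuous_on ballI) (blast intro: has_derivative_continuous)
qed

lemma continuous_on_affine_fun: "affine_fun a \<Longrightarrow> continuous_on S a"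
  unfolding affine_fun_def by (auto intro!: continuous_intros)

lemma penalized_le_on_frontier_cylinder:
  fixes u :: "real^('n::finite option) \<Rightarrow> ereal"
  assumes "z \<in> frontier (cylinder t0 \<delta> K)" and "z \<in> cylinder t0 \<delta> K"
    and "u z < ereal (w + B)" and "B \<le> M * \<delta>\<^sup>2" and "M \<ge> 0" and "e > 0"
    and "spatial z \<in> frontier K \<Longrightarrow> u z < ereal (w + e)"
  shows "u z + ereal (p - M * (z $ None - t0)\<^sup>2) \<le> ereal (p + w + e)"
  using frontier_cylinder_cases[OF assms(1,2)]
proof
  assume "\<bar>z $ None - t0\<bar> = \<delta>"
  then have "(z $ None - t0)\<^sup>2 = \<delta>\<^sup>2"
    by (metis power2_abs)
  then show ?thesis
    using assms(3-6) by (intro ereal_add_le_if_less[of _ "w + B"]) auto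
next
  assume "spatial z \<in> frontier K"
  then show ?thesis
    using assms(5,7) by (intro ereal_add_le_if_less[of _ "w + e"]) auto
qed

text \<open>The penalty \<open>M (t - t\<^sub>0)\<^sup>2\<close> vanishes on the slice \<open>t = t\<^sub>0\<close> and, for large \<open>M\<close>,
  dominates \<open>u\<close> on the top and bottom of a thin cylinder over \<open>K\<close>; on its side the boundary
  hypothesis for \<open>K\<close> persists by upper semicontinuity.\<close>

lemma slice_le_affine_plus:
  fixes u :: "real^('n::finite option) \<Rightarrow> ereal" and v a :: "real^'n \<Rightarrow> real"
  assumes X: "open X" and u_usc: "usc_on X u" and u_finite: "\<forall>z\<in>X. u z < \<infinity>"
    and slice: "spacetime t0 ` D \<subseteq> X" and spatial: "spatial ` X \<subseteq> D"
    and v: "continuous_on D v"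
    and penalized: "\<And>M. M > 0 \<Longrightarrow> subaffine X (\<lambda>z. u z + ereal (v (spatial z) - M * (z $ None - t0)\<^sup>2))"
    and K: "compact K" "K \<subseteq> D" and a: "affine_fun a"
    and boundary: "\<forall>y\<in>frontier K. u (spacetime t0 y) + ereal (v y) \<le> ereal (a y)"
    and e: "e > 0" and y: "y \<in> K"
  shows "u (spacetime t0 y) + ereal (v y) \<le> ereal (a y + e)"
proof -
  define w where "w z = a (spatial z) - v (spatial z)" for z
  have w_cont: "continuous_on X w"
    unfolding w_def using spatial
    by (intro continuous_intros continuous_on_compose2[OF continuous_on_affine_fun[OF a]]
        continuous_on_compose2[OF v]) auto
  define U where "U = {z \<in> X. u z < ereal (w z + e)}"
  have "open U"
    unfolding U_def by (rule usc_on_open_less[OF X u_usc]) (intro continuous_intros w_cont)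
  have "frontier K \<subseteq> K"
    using K(1) by (simp add: compact_imp_closed frontier_subset_closed)
  then have "spacetime t0 ` frontier K \<subseteq> U"
    using boundary slice K(2) ereal_less_if_add_le[OF _ e] by (force simp: U_def w_def)
  then obtain \<delta>1 where \<delta>1: "\<delta>1 > 0" "cylinder t0 \<delta>1 (frontier K) \<subseteq> U"
    by (rule cylinder_subset_open[OF compact_frontier[OF K(1)] \<open>open U\<close>])
  obtain \<delta>2 where \<delta>2: "\<delta>2 > 0" "cylinder t0 \<delta>2 K \<subseteq> X"
    by (rule cylinder_subset_open[OF K(1) X]) (use slice K(2) in auto)
  define \<delta> where "\<delta> = min \<delta>1 \<delta>2"
  define C where "C = cylinder t0 \<delta> K"
  have "\<delta> > 0" "compact C" "C \<subseteq> X"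
    using \<delta>1 \<delta>2 compact_cylinder[OF K(1)] cylinder_mono[of \<delta> \<delta>2 t0 K]
    by (auto simp: C_def \<delta>_def)
  then obtain B where B: "\<forall>z\<in>C. u z < ereal (w z + B)"
    using usc_on_compact_bounded_above[OF X u_usc u_finite w_cont] by blast
  define M where "M = \<bar>B\<bar> / \<delta>\<^sup>2 + 1"
  have "M * \<delta>\<^sup>2 = \<bar>B\<bar> + \<delta>\<^sup>2"
    using \<open>\<delta> > 0\<close> by (simp add: M_def field_simps)
  moreover have "B \<le> \<bar>B\<bar> + \<delta>\<^sup>2"
    using abs_ge_self[of B] zero_le_power2[of \<delta>] by linarith
  ultimately have M: "M > 0" "B \<le> M * \<delta>\<^sup>2"
    by (simp_all add: M_def add_nonneg_pos)
  have "u z + ereal (v (spatial z) - M * (z $ None - t0)\<^sup>2) \<le> ereal (a (spatial z) + e)"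
    if z: "z \<in> frontier C" for z
  proof -
    have "z \<in> C"
      using z \<open>compact C\<close> compact_imp_closed frontier_subset_closed by blast
    moreover have "z \<in> U" if "spatial z \<in> frontier K"
      using \<open>z \<in> C\<close> that \<delta>1(2) cylinder_mono[of \<delta> \<delta>1] by (auto simp: C_def cylinder_def \<delta>_def)
    ultimately show ?thesis
      using penalized_le_on_frontier_cylinder[OF z[unfolded C_def], of u "w z" B M e "v (spatial z)"]
        B M e by (auto simp: C_def U_def w_def)
  qed
  then have "\<forall>z\<in>C. u z + ereal (v (spatial z) - M * (z $ None - t0)\<^sup>2) \<le> ereal (a (spatial z) + e)"
    using penalized[OF M(1)] \<open>compact C\<close> \<open>C \<subseteq> X\<close> affine_fun_spatial[OF a]
    unfolding subaffine_def by blast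
  moreover have "spacetime t0 y \<in> C"
    using y \<open>\<delta> > 0\<close> by (simp add: C_def)
  ultimately show ?thesis
    by fastforce
qed

lemma subaffine_slice:
  fixes u :: "real^('n::finite option) \<Rightarrow> ereal" and v :: "real^'n \<Rightarrow> real"
  assumes X: "open X" and u_usc: "usc_on X u" and u_finite: "\<forall>z\<in>X. u z < \<infinity>"
    and slice: "spacetime t0 ` D \<subseteq> X" and spatial: "spatial ` X \<subseteq> D"
    and v: "continuous_on D v"
    and penalized: "\<And>M. M > 0 \<Longrightarrow> subaffine X (\<lambda>z. u z + ereal (v (spatial z) - M * (z $ None - t0)\<^sup>2))"
  shows "subaffine D (\<lambda>y. u (spacetime t0 y) + ereal (v y))"
  unfolding subaffine_def
proof (intro conjI allI impI ballI)
  have "usc_on X (\<lambda>z. u z + ereal (v (spatial z) - 1 * (z $ None - t0)\<^sup>2))"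
    using penalized[of 1] by (simp add: subaffine_def)
  from usc_on_spacetime_slice[OF this slice]
  show "usc_on D (\<lambda>y. u (spacetime t0 y) + ereal (v y))"
    by simp
next
  fix K a y
  assume "compact K \<and> K \<subseteq> D \<and> affine_fun a \<and>
    (\<forall>y\<in>frontier K. u (spacetime t0 y) + ereal (v y) \<le> ereal (a y))" and y: "y \<in> K"
  then have K: "compact K" "K \<subseteq> D" "affine_fun a"
    "\<forall>y\<in>frontier K. u (spacetime t0 y) + ereal (v y) \<le> ereal (a y)"
    by simp_all
  show "u (spacetime t0 y) + ereal (v y) \<le> ereal (a y)"
  proof (rule ereal_le_epsilon2)
    fix e :: real assume "0 < e"
    then show "u (spacetime t0 y) + ereal (v y) \<le> ereal (a y) + ereal e"
      using slice_le_affine_plus[OF assms K \<open>0 < e\<close> y] by simp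
  qed
qed

lemma open_time_slab:
  assumes "open D"
  shows "open {z :: real^('n::finite option). a < z $ None \<and> z $ None < b \<and> spatial z \<in> D}"
proof -
  have "continuous_on UNIV (\<lambda>z :: real^('n option). z $ None)"
    by (rule bounded_linear.continuous_on[OF bounded_linear_vec_nth continuous_on_id])
  then have "open ({z. a < z $ None} \<inter> {z. z $ None < b} \<inter> spatial -` D)"
    by (intro open_Int open_Collect_less open_vimage assms continuous_intros)
  then show ?thesis
    by (simp add: Int_def)
qed

theorem lemma9p1:
  fixes D :: "(real^'n) set" and u :: "real^('n option) \<Rightarrow> ereal" and c t0 :: real
  assumes "open D" and "connected D" and "D \<noteq> {}"
    and "\<bar>c\<bar> < (real CARD('n) + 1) * pi / 2"
    and "u \<in> F_class (Fpar c) {x. 0 < x $ None \<and> x $ None < 1 \<and> (\<chi> i. x $ Some i) \<in> D}"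
    and "0 < t0" and "t0 < 1"
  shows "(\<lambda>y. u (\<chi> j. case j of None \<Rightarrow> t0 | Some i \<Rightarrow> y $ i)) \<in> F_class (Fc (c - pi / 2)) D"
proof -
  define X where "X = {z :: real^('n option). 0 < z $ None \<and> z $ None < 1 \<and> spatial z \<in> D}"
  have "u \<in> F_class (Fpar c) X"
    using assms(5) by (simp add: X_def spatial_def)
  then have u_finite: "\<forall>z\<in>X. u z < \<infinity>" and u_usc: "usc_on X u"
    and u_test: "\<And>w G. C2_hess X w G \<Longrightarrow> \<forall>z\<in>X. G z \<in> dual_set (Fpar c) \<Longrightarrow>
      subaffine X (\<lambda>z. u z + ereal (w z))"
    by (auto simp: F_class_def)
  have X_open: "open X" and slice: "spacetime t0 ` D \<subseteq> X" and spatial: "spatial ` X \<subseteq> D"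
    using open_time_slab[OF assms(1)] assms(6,7) by (auto simp: X_def)
  have "(\<lambda>y. u (\<chi> j. case j of None \<Rightarrow> t0 | Some i \<Rightarrow> y $ i)) = (\<lambda>y. u (spacetime t0 y))"
    by (simp add: spacetime_def)
  moreover have "(\<lambda>y. u (spacetime t0 y)) \<in> F_class (Fc (c - pi / 2)) D"
    unfolding F_class_def
  proof (intro CollectI conjI allI impI)
    show "\<forall>y\<in>D. u (spacetime t0 y) < \<infinity>"
      using u_finite slice by auto
    show "usc_on D (\<lambda>y. u (spacetime t0 y))"
      by (rule usc_on_spacetime_slice[OF u_usc slice])
    fix v H assume vH: "C2_hess D v H \<and> (\<forall>y\<in>D. H y \<in> dual_set (Fc (c - pi / 2)))"
    have "subaffine X (\<lambda>z. u z + ereal (v (spatial z) - M * (z $ None - t0)\<^sup>2))" if "M > 0" for M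
    proof (rule u_test[OF C2_hess_penalized[OF _ spatial]])
      show "\<forall>z\<in>X. block_diag (- 2 * M) (H (spatial z)) \<in> dual_set (Fpar c)"
        using block_diag_mem_dual_Fpar[of "2 * M"] vH spatial that by auto
    qed (use vH in blast)
    then show "subaffine D (\<lambda>y. u (spacetime t0 y) + ereal (v y))"
      using subaffine_slice[OF X_open u_usc u_finite slice spatial C2_hess_continuous_on] vH by blast
  qed
  ultimately show ?thesis
    by simp
qed

end
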